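(* Let $X$ and $Y$ be topological spaces with $Y$ a $T_0$-space, and let $p\colon X\to Y$ be a surjective continuous map. Let $R$ be an equivalence relation on $X$ such that: (i) if $x_1\sim_R x_2$ then $p(x_1)=p(x_2)$; (ii) for every open $U\subset X$, its $R$-saturation $R(U):=\{x\in X: x\sim_R u \text{ for some } u\in U\}$ is open in $X$; (iii) if $x\in X$ and $A\subset X$ satisfy $p(x)\in\overline{p(A)}$, then $x\in\overline{R(A)}$. Then $p$ induces a homeomorphism of $(X/R)^\sim$ onto $Y$. Moreover, $p\colon X\to Y$ is open, and $p(x_1)=p(x_2)$ if and only if $\overline{R(x_1)}=\overline{R(x_2)}$, where $R(x)$ denotes the $R$-equivalence class of $x$.
   Context: For a topological space $Z$, its $T_0$-ization (Kolmogorov quotient) $Z^\sim$ is the quotient space of $Z$ obtained by identifying two points whenever they have the same closure. $X/R$ carries the quotient topology. *)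

theory Defs
  imports "HOL-Analysis.Analysis"
begin

definition quotient_topology :: "'a topology \<Rightarrow> ('a \<times> 'a) set \<Rightarrow> 'a set topology" where
  "quotient_topology Z E =
     topology (\<lambda>S. S \<subseteq> topspace Z // E \<and> openin Z (\<Union>S))"

definition same_closure_rel :: "'a topology \<Rightarrow> ('a \<times> 'a) set" where
  "same_closure_rel Z =
     {(z, w). z \<in> topspace Z \<and> w \<in> topspace Z \<and> Z closure_of {z} = Z closure_of {w}}"

definition T0_ization :: "'a topology \<Rightarrow> 'a set topology" where
  "T0_ization Z = quotient_topology Z (same_closure_rel Z)"

end

theory Submission
  imports Defs
begin

text \<open>By (i), p factors through X/R as a map h. Hypothesis (iii) shows that p is open (a point
  of p(U) adherent to its complement would pull back into U and into the closure of an R-saturated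
  set avoiding U), so p and hence h are quotient maps. It also shows that the closure of R(x) is the
  preimage of the closure of {p x}: classes with the same image under p are topologically
  indistinguishable in X/R, while the T0 axiom on Y separates classes with different images.
  A quotient map onto a T0 space whose fibres consist of indistinguishable points induces a
  homeomorphism from the T0-ization of its domain.\<close>

lemma Union_Int_quotient:
  assumes "equiv A r" "S \<subseteq> A // r" "T \<subseteq> A // r"
  shows "\<Union>(S \<inter> T) = \<Union>S \<inter> \<Union>T"
proof
  show "\<Union>S \<inter> \<Union>T \<subseteq> \<Union>(S \<inter> T)"
  proof
    fix x assume "x \<in> \<Union>S \<inter> \<Union>T"
    then obtain C D where "x \<in> C" "C \<in> S" "x \<in> D" "D \<in> T" by blast
    moreover have "C = D"
      using quotient_disj[OF assms(1), of C D] assms(2,3) calculation by blast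
    ultimately show "x \<in> \<Union>(S \<inter> T)" by blast
  qed
qed blast

lemma openin_quotient_topology:
  assumes E: "equiv (topspace Z) E"
  shows "openin (quotient_topology Z E) S \<longleftrightarrow> S \<subseteq> topspace Z // E \<and> openin Z (\<Union>S)"
proof -
  have "istopology (\<lambda>S. S \<subseteq> topspace Z // E \<and> openin Z (\<Union>S))"
  proof (simp only: istopology_def, rule conjI; intro allI impI)
    fix S T assume "S \<subseteq> topspace Z // E \<and> openin Z (\<Union>S)" "T \<subseteq> topspace Z // E \<and> openin Z (\<Union>T)"
    then show "S \<inter> T \<subseteq> topspace Z // E \<and> openin Z (\<Union>(S \<inter> T))"
      by (simp add: Union_Int_quotient[OF E] le_infI1 openin_Int)
  next
    fix K assume "\<forall>S\<in>K. S \<subseteq> topspace Z // E \<and> openin Z (\<Union>S)"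
    moreover have "\<Union>(\<Union>K) = \<Union>(Union ` K)" by auto
    ultimately show "\<Union>K \<subseteq> topspace Z // E \<and> openin Z (\<Union>(\<Union>K))"
      by (auto intro: openin_Union)
  qed
  then show ?thesis
    unfolding quotient_topology_def by simp
qed

lemma topspace_quotient_topology:
  assumes E: "equiv (topspace Z) E"
  shows "topspace (quotient_topology Z E) = topspace Z // E"
proof
  show "topspace (quotient_topology Z E) \<subseteq> topspace Z // E"
    using openin_quotient_topology[OF E, of "topspace (quotient_topology Z E)"] by simp
  have "openin (quotient_topology Z E) (topspace Z // E)"
    using E by (simp add: openin_quotient_topology Union_quotient)
  then show "topspace Z // E \<subseteq> topspace (quotient_topology Z E)"
    by (rule openin_subset)
qed

lemma quotient_map_quotient_topology:
  assumes E: "equiv (topspace Z) E"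
  shows "quotient_map Z (quotient_topology Z E) (\<lambda>z. E `` {z})"
  unfolding quotient_map_def
proof (intro conjI allI impI)
  show "(\<lambda>z. E `` {z}) ` topspace Z = topspace (quotient_topology Z E)"
    using E by (auto simp: topspace_quotient_topology quotient_def)
  fix U assume "U \<subseteq> topspace (quotient_topology Z E)"
  then have U: "U \<subseteq> topspace Z // E"
    using E by (simp add: topspace_quotient_topology)
  have "{z \<in> topspace Z. E `` {z} \<in> U} = \<Union>U"
  proof
    show "{z \<in> topspace Z. E `` {z} \<in> U} \<subseteq> \<Union>U"
      using E by (auto simp: equiv_def refl_on_def)
    show "\<Union>U \<subseteq> {z \<in> topspace Z. E `` {z} \<in> U}"
    proof
      fix z assume "z \<in> \<Union>U"
      then obtain C where "z \<in> C" "C \<in> U" by blast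
      moreover have "C \<in> topspace Z // E" using U \<open>C \<in> U\<close> by blast
      ultimately have "E `` {z} = C" "z \<in> topspace Z"
        using E by (auto elim!: quotientE intro: equiv_class_eq simp: equiv_class_eq_iff)
      with \<open>C \<in> U\<close> show "z \<in> {z \<in> topspace Z. E `` {z} \<in> U}" by simp
    qed
  qed
  then show "openin Z {z \<in> topspace Z. E `` {z} \<in> U} = openin (quotient_topology Z E) U"
    using U E by (simp add: openin_quotient_topology)
qed

lemma equiv_same_closure_rel: "equiv (topspace Z) (same_closure_rel Z)"
  unfolding equiv_def refl_on_def sym_def trans_def same_closure_rel_def by auto

lemma same_closure_rel_iff:
  "z \<in> topspace Z \<Longrightarrow> w \<in> topspace Z \<Longrightarrow>
     same_closure_rel Z `` {z} = same_closure_rel Z `` {w} \<longleftrightarrow> Z closure_of {z} = Z closure_of {w}"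
  by (subst eq_equiv_class_iff[OF equiv_same_closure_rel]) (auto simp: same_closure_rel_def)

lemma quotient_map_T0_ization: "quotient_map Z (T0_ization Z) (\<lambda>z. same_closure_rel Z `` {z})"
  unfolding T0_ization_def by (rule quotient_map_quotient_topology[OF equiv_same_closure_rel])

lemma closure_of_sing_eqI:
  assumes "z \<in> Z closure_of {w}" "w \<in> Z closure_of {z}"
  shows "Z closure_of {z} = Z closure_of {w}"
proof (rule subset_antisym)
  show "Z closure_of {z} \<subseteq> Z closure_of {w}"
    using assms(1) by (intro closure_of_minimal) auto
  show "Z closure_of {w} \<subseteq> Z closure_of {z}"
    using assms(2) by (intro closure_of_minimal) auto
qed

lemma continuous_map_into_t0_eq:
  assumes "continuous_map Z Y h" "t0_space Y" "z \<in> topspace Z" "w \<in> topspace Z"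
    and "Z closure_of {z} = Z closure_of {w}"
  shows "h z = h w"
proof -
  have "z \<in> Z closure_of {w}" "w \<in> Z closure_of {z}"
    using assms(3-5) closure_of_subset[of "{z}" Z] closure_of_subset[of "{w}" Z] by auto
  then have "h z \<in> Y closure_of {h w}" "h w \<in> Y closure_of {h z}"
    using continuous_map_image_closure_subset[OF assms(1), of "{w}"]
      continuous_map_image_closure_subset[OF assms(1), of "{z}"] by auto
  then have "Y closure_of {h z} = Y closure_of {h w}"
    by (rule closure_of_sing_eqI)
  moreover have "h z \<in> topspace Y" "h w \<in> topspace Y"
    using assms(1,3,4) by (auto dest: continuous_map_image_subset_topspace)
  ultimately show ?thesis
    using assms(2) by (simp add: t0_space_closure_of_sing)
qed

lemma homeomorphic_map_T0_ization:
  assumes h: "quotient_map Z Y h" and "t0_space Y"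
    and fibres: "\<And>z w. z \<in> topspace Z \<Longrightarrow> w \<in> topspace Z \<Longrightarrow> h z = h w \<Longrightarrow>
                   Z closure_of {z} = Z closure_of {w}"
  obtains g where "homeomorphic_map (T0_ization Z) Y g"
    "\<And>z. z \<in> topspace Z \<Longrightarrow> g (same_closure_rel Z `` {z}) = h z"
proof -
  define \<pi> where "\<pi> z = same_closure_rel Z `` {z}" for z
  have q\<pi>: "quotient_map Z (T0_ization Z) \<pi>"
    unfolding \<pi>_def by (rule quotient_map_T0_ization)
  have ker: "\<pi> z = \<pi> w \<longleftrightarrow> h z = h w" if "z \<in> topspace Z" "w \<in> topspace Z" for z w
  proof -
    have "\<pi> z = \<pi> w \<longleftrightarrow> Z closure_of {z} = Z closure_of {w}"
      using that by (simp add: \<pi>_def same_closure_rel_iff)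
    also have "\<dots> \<longleftrightarrow> h z = h w"
      using that fibres continuous_map_into_t0_eq[OF quotient_imp_continuous_map[OF h] \<open>t0_space Y\<close>]
      by blast
    finally show ?thesis .
  qed
  obtain g where g: "continuous_map (T0_ization Z) Y g" "\<And>z. z \<in> topspace Z \<Longrightarrow> g (\<pi> z) = h z"
    using quotient_map_lift_exists[OF q\<pi> quotient_imp_continuous_map[OF h]] ker by metis
  have "quotient_map (T0_ization Z) Y g"
    using quotient_map_from_composition[OF quotient_imp_continuous_map[OF q\<pi>] g(1)]
      quotient_map_eq[OF h] g(2) by (metis comp_apply)
  moreover have "inj_on g (topspace (T0_ization Z))"
  proof -
    have "topspace (T0_ization Z) = \<pi> ` topspace Z"
      using q\<pi> by (simp add: quotient_map_def)
    then show ?thesis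
      by (auto simp: inj_on_def g(2) ker)
  qed
  ultimately show thesis
    using that g(2) by (simp add: homeomorphic_map_def \<pi>_def)
qed

locale closure_reflecting_map =
  fixes X :: "'a topology" and Y :: "'b topology" and p :: "'a \<Rightarrow> 'b" and R :: "('a \<times> 'a) set"
  assumes t0: "t0_space Y"
    and continuous: "continuous_map X Y p"
    and surjective: "p ` topspace X = topspace Y"
    and equiv: "equiv (topspace X) R"
    and fibrewise: "\<And>x1 x2. (x1, x2) \<in> R \<Longrightarrow> p x1 = p x2"
    and closure_reflecting: "\<And>x A. x \<in> topspace X \<Longrightarrow> A \<subseteq> topspace X \<Longrightarrow>
           p x \<in> Y closure_of (p ` A) \<Longrightarrow> x \<in> X closure_of (R `` A)"
begin

lemma Image_subset_preimage: "R `` A \<subseteq> {z \<in> topspace X. p z \<in> p ` A}"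
proof
  fix z assume "z \<in> R `` A"
  then obtain a where a: "a \<in> A" "(a, z) \<in> R" by blast
  then have "z \<in> topspace X"
    using equiv_type[OF equiv] by blast
  moreover have "p z \<in> p ` A"
    using fibrewise[OF a(2)] a(1) by (metis image_eqI)
  ultimately show "z \<in> {z \<in> topspace X. p z \<in> p ` A}" by blast
qed

lemma closure_of_class:
  assumes "x \<in> topspace X"
  shows "X closure_of (R `` {x}) = {z \<in> topspace X. p z \<in> Y closure_of {p x}}"
proof
  have "p x \<in> topspace Y"
    using assms continuous_map_image_subset_topspace[OF continuous] by blast
  then have "R `` {x} \<subseteq> {z \<in> topspace X. p z \<in> Y closure_of {p x}}"
    using Image_subset_preimage[of "{x}"] closure_of_subset[of "{p x}" Y] by auto
  then show "X closure_of (R `` {x}) \<subseteq> {z \<in> topspace X. p z \<in> Y closure_of {p x}}"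
    by (intro closure_of_minimal closedin_continuous_map_preimage[OF continuous]) auto
  show "{z \<in> topspace X. p z \<in> Y closure_of {p x}} \<subseteq> X closure_of (R `` {x})"
    using closure_reflecting[of _ "{x}"] assms by auto
qed

lemma open_map: "open_map X Y p"
  unfolding open_map_def
proof (intro allI impI)
  fix U assume U: "openin X U"
  define A where "A = {z \<in> topspace X. p z \<notin> p ` U}"
  have pA: "p ` A = topspace Y - p ` U"
    unfolding A_def using surjective by auto
  have "Y closure_of (topspace Y - p ` U) \<subseteq> topspace Y - p ` U"
  proof
    fix y assume y: "y \<in> Y closure_of (topspace Y - p ` U)"
    show "y \<in> topspace Y - p ` U"
    proof (rule ccontr)
      assume "y \<notin> topspace Y - p ` U"
      then obtain u where u: "u \<in> U" "y = p u"
        using y closure_of_subset_topspace[of Y] by blast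
      have "u \<in> X closure_of (R `` A)"
        using closure_reflecting[of u A] y u openin_subset[OF U] pA by (auto simp: A_def)
      then obtain z where "z \<in> R `` A" "z \<in> U"
        using U u(1) unfolding in_closure_of by blast
      then have "p z \<in> p ` A" "p z \<in> p ` U"
        using Image_subset_preimage[of A] by auto
      then show False
        using pA by blast
    qed
  qed
  then have "closedin Y (topspace Y - p ` U)"
    using closure_of_subset_eq by blast
  moreover have "p ` U \<subseteq> topspace Y"
    using surjective openin_subset[OF U] by blast
  ultimately show "openin Y (p ` U)"
    using openin_closedin_eq by blast
qed

lemma image_preimage_eq:
  assumes "S \<subseteq> topspace Y"
  shows "p ` {z \<in> topspace X. p z \<in> S} = S"
proof
  show "S \<subseteq> p ` {z \<in> topspace X. p z \<in> S}"
  proof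
    fix y assume "y \<in> S"
    then have "y \<in> p ` topspace X"
      using assms surjective by auto
    then obtain x where "x \<in> topspace X" "y = p x" by blast
    with \<open>y \<in> S\<close> show "y \<in> p ` {z \<in> topspace X. p z \<in> S}" by blast
  qed
qed auto

lemma eq_iff_closure_of_class_eq:
  assumes "x1 \<in> topspace X" "x2 \<in> topspace X"
  shows "p x1 = p x2 \<longleftrightarrow> X closure_of (R `` {x1}) = X closure_of (R `` {x2})"
proof -
  have "p x1 = p x2 \<longleftrightarrow> Y closure_of {p x1} = Y closure_of {p x2}"
    using t0 assms surjective by (auto simp: t0_space_closure_of_sing)
  also have "\<dots> \<longleftrightarrow> {z \<in> topspace X. p z \<in> Y closure_of {p x1}} = {z \<in> topspace X. p z \<in> Y closure_of {p x2}}"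
    (is "_ \<longleftrightarrow> ?P1 = ?P2")
  proof
    assume "?P1 = ?P2"
    then have "p ` ?P1 = p ` ?P2" by simp
    then show "Y closure_of {p x1} = Y closure_of {p x2}"
      by (simp add: image_preimage_eq closure_of_subset_topspace)
  qed simp
  also have "\<dots> \<longleftrightarrow> X closure_of (R `` {x1}) = X closure_of (R `` {x2})"
    using assms by (simp add: closure_of_class)
  finally show ?thesis .
qed

lemma class_in_closure_of_class:
  assumes "x \<in> topspace X" "y \<in> topspace X" "p x = p y"
  shows "R `` {x} \<in> quotient_topology X R closure_of {R `` {y}}"
proof -
  have "p y \<in> topspace Y"
    using assms(2) surjective by blast
  then have "p x \<in> Y closure_of {p y}"
    using assms(3) closure_of_subset[of "{p y}" Y] by simp
  then have "x \<in> X closure_of (R `` {y})"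
    using assms(1,2) by (simp add: closure_of_class)
  then have "R `` {x} \<in> (\<lambda>z. R `` {z}) ` (X closure_of (R `` {y}))"
    by (rule imageI)
  also have "\<dots> \<subseteq> quotient_topology X R closure_of ((\<lambda>z. R `` {z}) ` (R `` {y}))"
    using quotient_map_quotient_topology[OF equiv]
    by (intro continuous_map_image_closure_subset quotient_imp_continuous_map)
  also have "(\<lambda>z. R `` {z}) ` (R `` {y}) = {R `` {y}}"
  proof -
    have "R `` {z} = R `` {y}" if "z \<in> R `` {y}" for z
      using that by (intro equiv_class_eq[OF equiv, symmetric]) simp
    moreover have "y \<in> R `` {y}"
      using equiv_class_self[OF equiv assms(2)] .
    ultimately show ?thesis
      by blast
  qed
  finally show ?thesis .
qed

lemma quotient_topology_lift:
  obtains h where "quotient_map (quotient_topology X R) Y h"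
    "\<And>x. x \<in> topspace X \<Longrightarrow> h (R `` {x}) = p x"
    "\<And>C D. C \<in> topspace (quotient_topology X R) \<Longrightarrow> D \<in> topspace (quotient_topology X R) \<Longrightarrow>
       h C = h D \<Longrightarrow> quotient_topology X R closure_of {C} = quotient_topology X R closure_of {D}"
proof -
  define q where "q x = R `` {x}" for x
  have qQ: "quotient_map X (quotient_topology X R) q"
    unfolding q_def by (rule quotient_map_quotient_topology[OF equiv])
  obtain h where h_cont: "continuous_map (quotient_topology X R) Y h"
    and "h ` topspace (quotient_topology X R) = p ` topspace X"
    and h_lift: "\<And>x. x \<in> topspace X \<Longrightarrow> h (q x) = p x"
  proof (rule quotient_map_lift_exists[OF qQ continuous])
    show "p x = p y" if "x \<in> topspace X" "y \<in> topspace X" "q x = q y" for x y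
      using eq_equiv_class_iff[OF equiv that(1,2)] that(3) fibrewise unfolding q_def by blast
  qed (rule that)
  have "quotient_map X Y p"
    by (rule continuous_open_imp_quotient_map[OF continuous open_map surjective])
  then have "quotient_map X Y (h \<circ> q)"
    by (rule quotient_map_eq) (simp add: h_lift)
  then have hQ: "quotient_map (quotient_topology X R) Y h"
    by (rule quotient_map_from_composition[OF quotient_imp_continuous_map[OF qQ] h_cont])
  show thesis
  proof (rule that[OF hQ])
    show "h (R `` {x}) = p x" if "x \<in> topspace X" for x
      using h_lift[OF that] by (simp add: q_def)
    fix C D
    assume "C \<in> topspace (quotient_topology X R)" "D \<in> topspace (quotient_topology X R)"
      and hCD: "h C = h D"
    then have "C \<in> q ` topspace X" "D \<in> q ` topspace X"
      using qQ by (simp_all add: quotient_map_def)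
    then obtain x y where x: "x \<in> topspace X" "C = q x" and y: "y \<in> topspace X" "D = q y"
      by (elim imageE)
    with hCD have "p x = p y"
      by (simp add: h_lift)
    then have "C \<in> quotient_topology X R closure_of {D}" "D \<in> quotient_topology X R closure_of {C}"
      using class_in_closure_of_class[OF x(1) y(1)] class_in_closure_of_class[OF y(1) x(1)]
      unfolding x(2) y(2) q_def by auto
    then show "quotient_topology X R closure_of {C} = quotient_topology X R closure_of {D}"
      by (rule closure_of_sing_eqI)
  qed
qed

end

theorem lemma1p4:
  fixes X :: "'a topology" and Y :: "'b topology"
    and p :: "'a \<Rightarrow> 'b" and R :: "('a \<times> 'a) set"
  assumes "t0_space Y"
    and "continuous_map X Y p"
    and "p ` topspace X = topspace Y"
    and "equiv (topspace X) R"
    and "\<And>x1 x2. (x1, x2) \<in> R \<Longrightarrow> p x1 = p x2"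
    and "\<And>U. openin X U \<Longrightarrow> openin X (R `` U)"
    and "\<And>x A. x \<in> topspace X \<Longrightarrow> A \<subseteq> topspace X \<Longrightarrow>
           p x \<in> Y closure_of (p ` A) \<Longrightarrow> x \<in> X closure_of (R `` A)"
  shows "(\<exists>f. homeomorphic_map (T0_ization (quotient_topology X R)) Y f \<and>
            (\<forall>x \<in> topspace X.
               f (same_closure_rel (quotient_topology X R) `` {R `` {x}}) = p x))
         \<and> open_map X Y p
         \<and> (\<forall>x1 \<in> topspace X. \<forall>x2 \<in> topspace X.
               p x1 = p x2 \<longleftrightarrow> X closure_of (R `` {x1}) = X closure_of (R `` {x2}))"
proof -
  interpret closure_reflecting_map X Y p R
    by (rule closure_reflecting_map.intro) (fact assms)+
  obtain h where hQ: "quotient_map (quotient_topology X R) Y h"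
    and h_lift: "\<And>x. x \<in> topspace X \<Longrightarrow> h (R `` {x}) = p x"
    and h_fibres: "\<And>C D. C \<in> topspace (quotient_topology X R) \<Longrightarrow>
        D \<in> topspace (quotient_topology X R) \<Longrightarrow> h C = h D \<Longrightarrow>
        quotient_topology X R closure_of {C} = quotient_topology X R closure_of {D}"
    by (rule quotient_topology_lift) (rule that)
  obtain g where g: "homeomorphic_map (T0_ization (quotient_topology X R)) Y g"
    and g_lift: "\<And>C. C \<in> topspace (quotient_topology X R) \<Longrightarrow>
        g (same_closure_rel (quotient_topology X R) `` {C}) = h C"
  proof (rule homeomorphic_map_T0_ization[OF hQ t0])
    show "quotient_topology X R closure_of {C} = quotient_topology X R closure_of {D}"
      if "C \<in> topspace (quotient_topology X R)" "D \<in> topspace (quotient_topology X R)" "h C = h D"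
      for C D
      using that by (rule h_fibres)
  qed (rule that)
  have "g (same_closure_rel (quotient_topology X R) `` {R `` {x}}) = p x" if "x \<in> topspace X" for x
    using that g_lift h_lift by (simp add: topspace_quotient_topology[OF equiv] quotientI)
  with g open_map eq_iff_closure_of_class_eq show ?thesis
    by blast
qed

end
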